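(* Let $(X,G)$ be a transitive continuous action and $m\in\mathbb{N}$, $m\geq 2$. Then $(X,G)$ is $m$-sensitive if and only if it is not almost $m$-equicontinuous; that is, exactly one of the two properties holds.
   Context: $G$ is a locally compact topological group acting continuously on a compact metric space $(X,d)$. $(X,G)$ is transitive if for any nonempty open $U,V\subset X$ there is $g\in G$ with $U\cap gV\neq\emptyset$. $(X,G)$ is $m$-sensitive if there exists $\varepsilon>0$ such that for every nonempty open $U\subset X$ there are distinct $x_1,\dots,x_m\in U$ and $g\in G$ with $d(gx_i,gx_j)\geq\varepsilon$ for all $i\neq j$. A point $x$ is an $m$-equicontinuity point if for every $\varepsilon>0$ there is $\delta>0$ such that for any $x_1,\dots,x_m$ in the open ball $B_\delta(x)$ and every $g\in G$ there exist $i\neq j$ with $d(gx_i,gx_j)<\varepsilon$; $E^m(X,G)$ is the set of such points, and $(X,G)$ is almost $m$-equicontinuous if $E^m(X,G)$ is residual in $X$. *)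

theory Defs
  imports "HOL-Analysis.Analysis"
begin

definition group_action :: "('g::group_add \<Rightarrow> 'x \<Rightarrow> 'x) \<Rightarrow> 'x set \<Rightarrow> bool" where
  "group_action act X \<longleftrightarrow>
     (\<forall>g x. x \<in> X \<longrightarrow> act g x \<in> X) \<and>
     (\<forall>x\<in>X. act 0 x = x) \<and>
     (\<forall>g h x. x \<in> X \<longrightarrow> act (g + h) x = act g (act h x))"

definition continuous_action ::
  "('g::{topological_space,group_add} \<Rightarrow> 'x::topological_space \<Rightarrow> 'x) \<Rightarrow> 'x set \<Rightarrow> bool" where
  "continuous_action act X \<longleftrightarrow>
     group_action act X \<and> continuous_on (UNIV \<times> X) (\<lambda>p. act (fst p) (snd p))"

definition transitive_action :: "('g \<Rightarrow> 'x::topological_space \<Rightarrow> 'x) \<Rightarrow> 'x set \<Rightarrow> bool" where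
  "transitive_action act X \<longleftrightarrow>
     (\<forall>U V. openin (top_of_set X) U \<and> U \<noteq> {} \<and> openin (top_of_set X) V \<and> V \<noteq> {}
        \<longrightarrow> (\<exists>g. U \<inter> act g ` V \<noteq> {}))"

definition m_sensitive :: "nat \<Rightarrow> ('g \<Rightarrow> 'x::metric_space \<Rightarrow> 'x) \<Rightarrow> 'x set \<Rightarrow> bool" where
  "m_sensitive m act X \<longleftrightarrow>
     (\<exists>\<epsilon>>0. \<forall>U. openin (top_of_set X) U \<and> U \<noteq> {} \<longrightarrow>
        (\<exists>xs :: nat \<Rightarrow> 'x. inj_on xs {..<m} \<and> xs ` {..<m} \<subseteq> U \<and>
           (\<exists>g. \<forall>i<m. \<forall>j<m. i \<noteq> j \<longrightarrow> dist (act g (xs i)) (act g (xs j)) \<ge> \<epsilon>)))"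

definition m_equicontinuity_point ::
  "nat \<Rightarrow> ('g \<Rightarrow> 'x::metric_space \<Rightarrow> 'x) \<Rightarrow> 'x set \<Rightarrow> 'x \<Rightarrow> bool" where
  "m_equicontinuity_point m act X x \<longleftrightarrow> x \<in> X \<and>
     (\<forall>\<epsilon>>0. \<exists>\<delta>>0. \<forall>xs :: nat \<Rightarrow> 'x. (\<forall>i<m. xs i \<in> ball x \<delta> \<inter> X) \<longrightarrow>
        (\<forall>g. \<exists>i<m. \<exists>j<m. i \<noteq> j \<and> dist (act g (xs i)) (act g (xs j)) < \<epsilon>))"

definition E_m :: "nat \<Rightarrow> ('g \<Rightarrow> 'x::metric_space \<Rightarrow> 'x) \<Rightarrow> 'x set \<Rightarrow> 'x set" where
  "E_m m act X = {x. m_equicontinuity_point m act X x}"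

definition residual_in :: "'x::topological_space set \<Rightarrow> 'x set \<Rightarrow> bool" where
  "residual_in E X \<longleftrightarrow>
     (\<exists>\<F>. countable \<F> \<and> (\<forall>U\<in>\<F>. openin (top_of_set X) U \<and> X \<subseteq> closure U) \<and>
          X \<inter> \<Inter>\<F> \<subseteq> E)"

definition almost_m_equicontinuous :: "nat \<Rightarrow> ('g \<Rightarrow> 'x::metric_space \<Rightarrow> 'x) \<Rightarrow> 'x set \<Rightarrow> bool" where
  "almost_m_equicontinuous m act X \<longleftrightarrow> residual_in (E_m m act X) X"

end

theory Submission
  imports Defs
begin

text \<open>Call an open set \<open>\<epsilon>\<close>-collapsing if no group element spreads an injective \<open>m\<close>-tuple
from it to pairwise distance \<open>\<epsilon>\<close>. Sensitivity says that for some \<open>\<epsilon>\<close> no nonempty open set is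
\<open>\<epsilon>\<close>-collapsing, while \<open>m\<close>-equicontinuity points are those with arbitrarily collapsing
neighbourhoods. If sensitivity fails, then for each \<open>\<epsilon> = 1/(n+1)\<close> some nonempty open set is
collapsing, and by transitivity its translates meet every nonempty open set; so the union of
all \<open>\<epsilon>\<close>-collapsing open sets is open and dense, and the intersection of these countably many
sets lies in \<open>E\<^sup>m\<close>. Conversely, under sensitivity \<open>E\<^sup>m\<close> is empty, which a residual subset of
a nonempty compact space cannot be, by the Baire category theorem.\<close>

definition m_collapsing :: "nat \<Rightarrow> ('g \<Rightarrow> 'x::metric_space \<Rightarrow> 'x) \<Rightarrow> real \<Rightarrow> 'x set \<Rightarrow> bool" where
  "m_collapsing m act \<epsilon> U \<longleftrightarrow>
     (\<forall>xs. inj_on xs {..<m} \<and> xs ` {..<m} \<subseteq> U \<longrightarrow>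
        (\<forall>g. \<exists>i<m. \<exists>j<m. i \<noteq> j \<and> dist (act g (xs i)) (act g (xs j)) < \<epsilon>))"

lemma m_collapsing_mono:
  assumes "m_collapsing m act \<epsilon> U" "\<epsilon> \<le> \<epsilon>'"
  shows "m_collapsing m act \<epsilon>' U"
  using assms unfolding m_collapsing_def by (meson less_le_trans)

lemma m_sensitive_iff_no_collapsing:
  "m_sensitive m act X \<longleftrightarrow>
     (\<exists>\<epsilon>>0. \<forall>U. openin (top_of_set X) U \<and> U \<noteq> {} \<longrightarrow> \<not> m_collapsing m act \<epsilon> U)"
proof -
  have "\<not> m_collapsing m act \<epsilon> U \<longleftrightarrow> (\<exists>xs. inj_on xs {..<m} \<and> xs ` {..<m} \<subseteq> U \<and>
      (\<exists>g. \<forall>i<m. \<forall>j<m. i \<noteq> j \<longrightarrow> dist (act g (xs i)) (act g (xs j)) \<ge> \<epsilon>))" for \<epsilon> U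
    unfolding m_collapsing_def by (auto simp: not_less[where x = "dist _ _"]) blast+
  then show ?thesis unfolding m_sensitive_def by simp
qed

lemma m_equicontinuity_point_imp_collapsing_ball:
  assumes "m_equicontinuity_point m act X x" "\<epsilon> > 0"
  obtains \<delta> where "\<delta> > 0" "m_collapsing m act \<epsilon> (ball x \<delta> \<inter> X)"
proof -
  obtain \<delta> where "\<delta> > 0" and \<delta>: "\<And>xs g. \<forall>i<m. xs i \<in> ball x \<delta> \<inter> X \<Longrightarrow>
      \<exists>i<m. \<exists>j<m. i \<noteq> j \<and> dist (act g (xs i)) (act g (xs j)) < \<epsilon>"
    using assms(1)[unfolded m_equicontinuity_point_def, THEN conjunct2, rule_format, OF assms(2)]
    by blast
  have "m_collapsing m act \<epsilon> (ball x \<delta> \<inter> X)"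
    unfolding m_collapsing_def
  proof (intro allI impI)
    fix xs g
    assume "inj_on xs {..<m} \<and> xs ` {..<m} \<subseteq> ball x \<delta> \<inter> X"
    then have "\<forall>i<m. xs i \<in> ball x \<delta> \<inter> X" by auto
    then show "\<exists>i<m. \<exists>j<m. i \<noteq> j \<and> dist (act g (xs i)) (act g (xs j)) < \<epsilon>"
      by (rule \<delta>)
  qed
  with \<open>\<delta> > 0\<close> show ?thesis by (rule that)
qed

lemma m_equicontinuity_pointI:
  assumes "x \<in> X"
    and "\<And>\<epsilon>. \<epsilon> > 0 \<Longrightarrow> \<exists>W. openin (top_of_set X) W \<and> x \<in> W \<and> m_collapsing m act \<epsilon> W"
  shows "m_equicontinuity_point m act X x"
  unfolding m_equicontinuity_point_def
proof (intro conjI allI impI)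
  fix \<epsilon> :: real
  assume "\<epsilon> > 0"
  then obtain W where W: "openin (top_of_set X) W" "x \<in> W" "m_collapsing m act \<epsilon> W"
    using assms(2) by blast
  then obtain \<delta> where "\<delta> > 0" and ball_W: "ball x \<delta> \<inter> X \<subseteq> W"
    by (meson openin_contains_ball)
  have "\<exists>i<m. \<exists>j<m. i \<noteq> j \<and> dist (act g (xs i)) (act g (xs j)) < \<epsilon>"
    if xs: "\<forall>i<m. xs i \<in> ball x \<delta> \<inter> X" for xs g
  proof (cases "inj_on xs {..<m}")
    case True
    moreover have "xs ` {..<m} \<subseteq> W" using xs ball_W by auto
    ultimately show ?thesis using W(3) unfolding m_collapsing_def by blast
  next
    case False
    then obtain i j where "i < m" "j < m" "i \<noteq> j" "xs i = xs j"
      unfolding inj_on_def by auto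
    then show ?thesis using \<open>\<epsilon> > 0\<close> by force
  qed
  with \<open>\<delta> > 0\<close> show "\<exists>\<delta>>0. \<forall>xs. (\<forall>i<m. xs i \<in> ball x \<delta> \<inter> X) \<longrightarrow>
      (\<forall>g. \<exists>i<m. \<exists>j<m. i \<noteq> j \<and> dist (act g (xs i)) (act g (xs j)) < \<epsilon>)"
    by blast
qed (use assms(1) in simp)

lemma m_sensitive_imp_E_m_empty:
  assumes "m_sensitive m act X"
  shows "E_m m act X = {}"
proof (rule ccontr)
  assume "E_m m act X \<noteq> {}"
  then obtain x where x: "m_equicontinuity_point m act X x"
    by (auto simp: E_m_def)
  obtain \<epsilon> where "\<epsilon> > 0"
    and no_collapsing: "\<And>U. openin (top_of_set X) U \<Longrightarrow> U \<noteq> {} \<Longrightarrow> \<not> m_collapsing m act \<epsilon> U"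
    using assms by (auto simp: m_sensitive_iff_no_collapsing)
  obtain \<delta> where "\<delta> > 0" "m_collapsing m act \<epsilon> (ball x \<delta> \<inter> X)"
    using m_equicontinuity_point_imp_collapsing_ball[OF x \<open>\<epsilon> > 0\<close>] .
  moreover have "x \<in> ball x \<delta> \<inter> X"
    using x \<open>\<delta> > 0\<close> by (simp add: m_equicontinuity_point_def)
  moreover have "openin (top_of_set X) (ball x \<delta> \<inter> X)"
    using openin_open_Int[of "ball x \<delta>" X] by (simp add: Int_commute)
  ultimately show False
    using no_collapsing[of "ball x \<delta> \<inter> X"] by blast
qed

lemma compact_residual_nonempty:
  fixes X :: "'x::metric_space set"
  assumes "compact X" "X \<noteq> {}" "residual_in E X"
  shows "E \<noteq> {}"
proof -
  obtain \<F> where \<F>: "countable \<F>" "\<forall>U\<in>\<F>. openin (top_of_set X) U \<and> X \<subseteq> closure U"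
    and "X \<inter> \<Inter>\<F> \<subseteq> E"
    using assms(3) by (auto simp: residual_in_def)
  have "top_of_set X closure_of \<Inter>\<F> = topspace (top_of_set X)"
  proof (rule Baire_category)
    show "completely_metrizable_space (top_of_set X) \<or>
        locally_compact_space (top_of_set X) \<and> regular_space (top_of_set X)"
      using assms(1)
      by (simp add: compact_imp_locally_compact_space compact_space_subtopology
          regular_space_subtopology regular_space_euclidean)
    fix T
    assume "T \<in> \<F>"
    then have "openin (top_of_set X) T" "X \<subseteq> closure T" using \<F>(2) by auto
    moreover have "T \<subseteq> X" using \<open>openin (top_of_set X) T\<close> by (rule openin_imp_subset)
    ultimately show "openin (top_of_set X) T \<and> top_of_set X closure_of T = topspace (top_of_set X)"
      by (auto simp: closure_of_subtopology Int_absorb1 closure_subset)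
  qed (fact \<F>(1))
  then have "X \<inter> \<Inter>\<F> \<noteq> {}"
    using assms(2) by (auto simp: closure_of_subtopology)
  with \<open>X \<inter> \<Inter>\<F> \<subseteq> E\<close> show ?thesis by blast
qed

lemma continuous_action_continuous_on:
  assumes "continuous_action act X"
  shows "continuous_on X (act g)"
proof -
  have "continuous_on (UNIV \<times> X) (\<lambda>p. act (fst p) (snd p))"
    using assms by (simp add: continuous_action_def)
  then have "continuous_on ((\<lambda>x. (g, x)) ` X) (\<lambda>p. act (fst p) (snd p))"
    by (rule continuous_on_subset) auto
  then have "continuous_on X ((\<lambda>p. act (fst p) (snd p)) \<circ> (\<lambda>x. (g, x)))"
    by (intro continuous_on_compose continuous_intros)
  then show ?thesis by (simp add: o_def)
qed

lemma group_actionD: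
  assumes "group_action act X" "x \<in> X"
  shows "act g x \<in> X" "act 0 x = x" "act (g + h) x = act g (act h x)"
  using assms by (auto simp: group_action_def)

lemma group_action_neg_cancel:
  assumes "group_action act X" "x \<in> X"
  shows "act (- g) (act g x) = x"
  using group_actionD(2)[OF assms] group_actionD(3)[OF assms, of "- g" g] by simp

lemma m_collapsing_preimage:
  fixes act :: "'g::group_add \<Rightarrow> 'x::metric_space \<Rightarrow> 'x"
  assumes "group_action act X" "m_collapsing m act \<epsilon> U"
  shows "m_collapsing m act \<epsilon> (X \<inter> act g -` U)"
  unfolding m_collapsing_def
proof (intro allI impI)
  fix xs :: "nat \<Rightarrow> 'x" and h
  assume xs: "inj_on xs {..<m} \<and> xs ` {..<m} \<subseteq> X \<inter> act g -` U"
  then have xs_X: "xs i \<in> X" if "i < m" for i using that by auto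
  have "inj_on (act g \<circ> xs) {..<m}"
    using xs group_action_neg_cancel[OF assms(1) xs_X]
    unfolding inj_on_def by (metis comp_apply lessThan_iff)
  moreover have "(act g \<circ> xs) ` {..<m} \<subseteq> U" using xs by auto
  \<comment> \<open>apply the collapsing property of \<open>U\<close> to the element \<open>h - g\<close>\<close>
  ultimately obtain i j where ij: "i < m" "j < m" "i \<noteq> j"
    "dist (act (h + - g) (act g (xs i))) (act (h + - g) (act g (xs j))) < \<epsilon>"
    using assms(2) unfolding m_collapsing_def by (metis comp_apply)
  have "act (h + - g) (act g (xs k)) = act h (xs k)" if "k < m" for k
    using group_actionD(3)[OF assms(1) group_actionD(1)[OF assms(1) xs_X[OF that]], of h "- g"]
      group_action_neg_cancel[OF assms(1) xs_X[OF that]]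
    by simp
  with ij show "\<exists>i<m. \<exists>j<m. i \<noteq> j \<and> dist (act h (xs i)) (act h (xs j)) < \<epsilon>"
    by metis
qed

definition collapsing_part :: "nat \<Rightarrow> ('g \<Rightarrow> 'x::metric_space \<Rightarrow> 'x) \<Rightarrow> 'x set \<Rightarrow> real \<Rightarrow> 'x set" where
  "collapsing_part m act X \<epsilon> = \<Union>{W. openin (top_of_set X) W \<and> m_collapsing m act \<epsilon> W}"

lemma openin_collapsing_part: "openin (top_of_set X) (collapsing_part m act X \<epsilon>)"
  unfolding collapsing_part_def by (rule openin_Union) simp

lemma dense_collapsing_part:
  assumes "continuous_action act X" "transitive_action act X"
    and "openin (top_of_set X) U" "U \<noteq> {}" "m_collapsing m act \<epsilon> U"
  shows "X \<subseteq> closure (collapsing_part m act X \<epsilon>)"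
proof
  fix x
  assume "x \<in> X"
  have "\<exists>y\<in>collapsing_part m act X \<epsilon>. dist y x < e" if "e > 0" for e
  proof -
    have V: "openin (top_of_set X) (ball x e \<inter> X)" "ball x e \<inter> X \<noteq> {}"
      using openin_open_Int[of "ball x e" X] \<open>x \<in> X\<close> \<open>e > 0\<close> by (auto simp: Int_commute)
    obtain g u where "u \<in> U" "act g u \<in> ball x e \<inter> X"
      using assms(2-4) V unfolding transitive_action_def by blast
    have ga: "group_action act X"
      using assms(1) by (simp add: continuous_action_def)
    have "openin (top_of_set X) (X \<inter> act (- g) -` U)"
      using continuous_openin_preimage[OF continuous_action_continuous_on[OF assms(1)] _ assms(3)]
        ga by (auto simp: group_action_def)
    moreover have "m_collapsing m act \<epsilon> (X \<inter> act (- g) -` U)"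
      using m_collapsing_preimage[OF ga assms(5)] .
    moreover have "act g u \<in> X \<inter> act (- g) -` U"
      using \<open>u \<in> U\<close> \<open>act g u \<in> ball x e \<inter> X\<close> openin_imp_subset[OF assms(3)]
        group_action_neg_cancel[OF ga]
      by auto
    ultimately have "act g u \<in> collapsing_part m act X \<epsilon>"
      unfolding collapsing_part_def by blast
    with \<open>act g u \<in> ball x e \<inter> X\<close> show ?thesis by (auto simp: dist_commute)
  qed
  then show "x \<in> closure (collapsing_part m act X \<epsilon>)"
    by (simp add: closure_approachable)
qed

lemma collapsing_parts_subset_E_m:
  "X \<inter> (\<Inter>n. collapsing_part m act X (inverse (real (Suc n)))) \<subseteq> E_m m act X"
proof
  fix x
  assume x: "x \<in> X \<inter> (\<Inter>n. collapsing_part m act X (inverse (real (Suc n))))"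
  have "\<exists>W. openin (top_of_set X) W \<and> x \<in> W \<and> m_collapsing m act \<epsilon> W" if "\<epsilon> > 0" for \<epsilon>
  proof -
    obtain n where n: "inverse (real (Suc n)) < \<epsilon>"
      using \<open>\<epsilon> > 0\<close> reals_Archimedean by blast
    obtain W where "openin (top_of_set X) W" "x \<in> W"
      "m_collapsing m act (inverse (real (Suc n))) W"
      using x unfolding collapsing_part_def by blast
    then show ?thesis using n by (meson less_imp_le m_collapsing_mono)
  qed
  with x show "x \<in> E_m m act X"
    by (auto simp: E_m_def intro: m_equicontinuity_pointI)
qed

lemma not_m_sensitive_imp_almost_m_equicontinuous:
  assumes "continuous_action act X" "transitive_action act X" "\<not> m_sensitive m act X"
  shows "almost_m_equicontinuous m act X"
proof -
  have "X \<subseteq> closure (collapsing_part m act X \<epsilon>)" if "\<epsilon> > 0" for \<epsilon>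
  proof -
    obtain U where "openin (top_of_set X) U" "U \<noteq> {}" "m_collapsing m act \<epsilon> U"
      using assms(3) \<open>\<epsilon> > 0\<close> by (auto simp: m_sensitive_iff_no_collapsing)
    then show ?thesis using dense_collapsing_part[OF assms(1,2)] by blast
  qed
  then show ?thesis
    unfolding almost_m_equicontinuous_def residual_in_def
  proof (intro exI[of _ "range (\<lambda>n. collapsing_part m act X (inverse (real (Suc n))))"] conjI)
    show "X \<inter> \<Inter> (range (\<lambda>n. collapsing_part m act X (inverse (real (Suc n))))) \<subseteq> E_m m act X"
      by (rule collapsing_parts_subset_E_m)
  qed (auto simp: openin_collapsing_part simp del: of_nat_Suc)
qed

theorem theorem4p9:
  fixes act :: "'g::{topological_group_add, t2_space} \<Rightarrow> 'x::metric_space \<Rightarrow> 'x"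
    and X :: "'x set" and m :: nat
  assumes "locally_compact_space (euclidean :: 'g topology)"
    and "compact X" and "X \<noteq> {}"
    and "continuous_action act X"
    and "transitive_action act X"
    and "m \<ge> 2"
  shows "m_sensitive m act X \<longleftrightarrow> \<not> almost_m_equicontinuous m act X"
proof
  assume "m_sensitive m act X"
  then have "E_m m act X = {}" by (rule m_sensitive_imp_E_m_empty)
  then show "\<not> almost_m_equicontinuous m act X"
    using compact_residual_nonempty[OF assms(2,3)] by (auto simp: almost_m_equicontinuous_def)
next
  assume "\<not> almost_m_equicontinuous m act X"
  then show "m_sensitive m act X"
    using not_m_sensitive_imp_almost_m_equicontinuous[OF assms(4,5)] by blast
qed

end
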